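(* Let $T$ be an iso-unique zero forcing tree with at least two vertices and let $\mathcal{P}$ be a minimum path cover of $T$. If a path $P\in\mathcal{P}$ consists of a single vertex $x$, then $x$ has a unique neighbor, and this neighbor is the middle vertex of a path $R\in\mathcal{P}$ with exactly three vertices (i.e., $R\cong P_3$).
   Context: Zero forcing: in a graph $G$, starting with an initial set $S\subseteq V(G)$ of active vertices, repeatedly apply the rule: if an active vertex $u$ has exactly one non-active neighbor $v$, then $v$ becomes active. $S$ is a zero forcing set if eventually all vertices become active; a minimum zero forcing set is one of minimum size. A graph is an iso-unique zero forcing graph if for every two minimum zero forcing sets $A,B$ there is an automorphism $\phi$ with $\phi(A)=B$. A path cover of a tree $T$ is a set of vertex-disjoint paths of $T$ (a single vertex counts as a path) covering all vertices of $T$; it is minimum if no path cover has fewer paths. *)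

theory Defs
  imports Main
begin

definition simple_graph :: "'a set \<Rightarrow> ('a \<Rightarrow> 'a \<Rightarrow> bool) \<Rightarrow> bool" where
  "simple_graph V E \<longleftrightarrow> finite V \<and> (\<forall>u v. E u v \<longrightarrow> u \<in> V \<and> v \<in> V)
     \<and> (\<forall>u v. E u v \<longrightarrow> E v u) \<and> (\<forall>u. \<not> E u u)"

definition is_walk :: "'a set \<Rightarrow> ('a \<Rightarrow> 'a \<Rightarrow> bool) \<Rightarrow> 'a list \<Rightarrow> bool" where
  "is_walk V E p \<longleftrightarrow> p \<noteq> [] \<and> set p \<subseteq> V \<and> (\<forall>i. Suc i < length p \<longrightarrow> E (p ! i) (p ! Suc i))"

definition is_path :: "'a set \<Rightarrow> ('a \<Rightarrow> 'a \<Rightarrow> bool) \<Rightarrow> 'a list \<Rightarrow> bool" where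
  "is_path V E p \<longleftrightarrow> is_walk V E p \<and> distinct p"

definition connected_graph :: "'a set \<Rightarrow> ('a \<Rightarrow> 'a \<Rightarrow> bool) \<Rightarrow> bool" where
  "connected_graph V E \<longleftrightarrow> (\<forall>u\<in>V. \<forall>v\<in>V. \<exists>p. is_walk V E p \<and> hd p = u \<and> last p = v)"

definition has_cycle :: "'a set \<Rightarrow> ('a \<Rightarrow> 'a \<Rightarrow> bool) \<Rightarrow> bool" where
  "has_cycle V E \<longleftrightarrow> (\<exists>c. is_path V E c \<and> length c \<ge> 3 \<and> E (last c) (hd c))"

definition is_tree :: "'a set \<Rightarrow> ('a \<Rightarrow> 'a \<Rightarrow> bool) \<Rightarrow> bool" where
  "is_tree V E \<longleftrightarrow> simple_graph V E \<and> V \<noteq> {} \<and> connected_graph V E \<and> \<not> has_cycle V E"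

text \<open>Vertices eventually active when starting from S (closure under the colour change rule).\<close>
inductive active :: "'a set \<Rightarrow> ('a \<Rightarrow> 'a \<Rightarrow> bool) \<Rightarrow> 'a set \<Rightarrow> 'a \<Rightarrow> bool"
  for V E S where
  init: "v \<in> S \<Longrightarrow> active V E S v"
| force: "\<lbrakk> u \<in> V; active V E S u; v \<in> V; E u v;
           \<forall>w\<in>V. E u w \<and> w \<noteq> v \<longrightarrow> active V E S w \<rbrakk> \<Longrightarrow> active V E S v"

definition zero_forcing_set :: "'a set \<Rightarrow> ('a \<Rightarrow> 'a \<Rightarrow> bool) \<Rightarrow> 'a set \<Rightarrow> bool" where
  "zero_forcing_set V E S \<longleftrightarrow> S \<subseteq> V \<and> (\<forall>v\<in>V. active V E S v)"

definition min_zero_forcing_set :: "'a set \<Rightarrow> ('a \<Rightarrow> 'a \<Rightarrow> bool) \<Rightarrow> 'a set \<Rightarrow> bool" where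
  "min_zero_forcing_set V E S \<longleftrightarrow> zero_forcing_set V E S \<and>
     (\<forall>S'. zero_forcing_set V E S' \<longrightarrow> card S \<le> card S')"

definition automorphism :: "'a set \<Rightarrow> ('a \<Rightarrow> 'a \<Rightarrow> bool) \<Rightarrow> ('a \<Rightarrow> 'a) \<Rightarrow> bool" where
  "automorphism V E \<phi> \<longleftrightarrow> bij_betw \<phi> V V \<and> (\<forall>u\<in>V. \<forall>v\<in>V. E u v \<longleftrightarrow> E (\<phi> u) (\<phi> v))"

definition iso_unique_zf :: "'a set \<Rightarrow> ('a \<Rightarrow> 'a \<Rightarrow> bool) \<Rightarrow> bool" where
  "iso_unique_zf V E \<longleftrightarrow> (\<forall>A B. min_zero_forcing_set V E A \<and> min_zero_forcing_set V E B
      \<longrightarrow> (\<exists>\<phi>. automorphism V E \<phi> \<and> \<phi> ` A = B))"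

definition path_cover :: "'a set \<Rightarrow> ('a \<Rightarrow> 'a \<Rightarrow> bool) \<Rightarrow> 'a list set \<Rightarrow> bool" where
  "path_cover V E \<P> \<longleftrightarrow> (\<forall>p\<in>\<P>. is_path V E p)
     \<and> (\<forall>p\<in>\<P>. \<forall>q\<in>\<P>. p \<noteq> q \<longrightarrow> set p \<inter> set q = {})
     \<and> (\<Union>p\<in>\<P>. set p) = V"

definition min_path_cover :: "'a set \<Rightarrow> ('a \<Rightarrow> 'a \<Rightarrow> bool) \<Rightarrow> 'a list set \<Rightarrow> bool" where
  "min_path_cover V E \<P> \<longleftrightarrow> path_cover V E \<P> \<and> finite \<P> \<and>
     (\<forall>\<Q>. path_cover V E \<Q> \<longrightarrow> card \<P> \<le> card \<Q>)"

end

theory Submission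
  imports Defs
begin

text \<open>In a forest the zero forcing number equals the path cover number: the forces of a zero
  forcing set trace out a path cover whose paths start in the set, and conversely one endpoint of
  every path of a cover forces the whole forest. So for a minimum path cover and any of its paths
  W, adding either endpoint of W to the heads of the other paths gives a minimum zero forcing set.
  Iso-uniqueness then implies that the two endpoints of W both have degree at least two or both
  do not, and the former is impossible: W could be prolonged through an outside neighbour of its
  last vertex, giving minimum path covers with ever longer paths. Hence the endpoints of the
  paths of a minimum path cover have degree at most one. For the singleton path [x] and the path
  R through the neighbour y of x, moving a part of R next to [x] yields further minimum path
  covers, and their endpoints have degree at most one only if R = [a, y, b].\<close>

lemma is_walk_Nil [simp]: "\<not> is_walk V E []"
  by (simp add: is_walk_def)

lemma is_walk_singleton [simp]: "is_walk V E [a] \<longleftrightarrow> a \<in> V"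
  by (simp add: is_walk_def)

lemma is_walk_Cons_Cons [simp]:
  "is_walk V E (a # b # xs) \<longleftrightarrow> a \<in> V \<and> E a b \<and> is_walk V E (b # xs)"
proof -
  have "(\<forall>i. Suc i < length (a # b # xs) \<longrightarrow> E ((a # b # xs) ! i) ((a # b # xs) ! Suc i)) \<longleftrightarrow>
        E a b \<and> (\<forall>i. Suc i < length (b # xs) \<longrightarrow> E ((b # xs) ! i) ((b # xs) ! Suc i))"
    by (metis Suc_less_eq length_Cons nat.exhaust nth_Cons_0 nth_Cons_Suc zero_less_Suc)
  then show ?thesis
    unfolding is_walk_def by auto
qed

lemma is_walk_Cons:
  "xs \<noteq> [] \<Longrightarrow> is_walk V E (a # xs) \<longleftrightarrow> a \<in> V \<and> E a (hd xs) \<and> is_walk V E xs"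
  by (cases xs) auto

lemma is_walk_append:
  "xs \<noteq> [] \<Longrightarrow> ys \<noteq> [] \<Longrightarrow>
    is_walk V E (xs @ ys) \<longleftrightarrow> is_walk V E xs \<and> is_walk V E ys \<and> E (last xs) (hd ys)"
  by (induction xs) (auto simp: is_walk_Cons)

lemma is_path_append:
  "xs \<noteq> [] \<Longrightarrow> ys \<noteq> [] \<Longrightarrow> is_path V E (xs @ ys) \<longleftrightarrow>
    is_path V E xs \<and> is_path V E ys \<and> set xs \<inter> set ys = {} \<and> E (last xs) (hd ys)"
  by (auto simp: is_path_def is_walk_append)

lemma is_walk_edge: "is_walk V E (xs @ a # b # ys) \<Longrightarrow> E a b"
  by (induction xs) (auto simp: is_walk_Cons)

lemma is_path_rev:
  assumes sym: "\<And>a b. E a b \<Longrightarrow> E b a" and "is_path V E p"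
  shows "is_path V E (rev p)"
proof -
  have "is_walk V E (rev p)" if "is_walk V E p" for p
    using that
  proof (induction p)
    case (Cons a p)
    then show ?case
      by (cases "p = []") (auto simp: is_walk_Cons is_walk_append last_rev sym)
  qed simp
  then show ?thesis
    using assms(2) by (simp add: is_path_def)
qed

lemma is_path_mono:
  "is_path V E p \<Longrightarrow> V \<subseteq> V' \<Longrightarrow> (\<And>a b. E a b \<Longrightarrow> E' a b) \<Longrightarrow> is_path V' E' p"
  unfolding is_path_def is_walk_def by blast

lemma has_cycle_mono:
  "has_cycle V E \<Longrightarrow> V \<subseteq> V' \<Longrightarrow> (\<And>a b. E a b \<Longrightarrow> E' a b) \<Longrightarrow> has_cycle V' E'"
  unfolding has_cycle_def by (metis is_path_mono)

lemma connected_graph_has_neighbour: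
  assumes conn: "connected_graph V E" and V: "finite V" "2 \<le> card V" and x: "x \<in> V"
  obtains y where "E x y"
proof -
  obtain v where v: "v \<in> V" "v \<noteq> x"
    using V x by (metis card_le_Suc0_iff_eq not_less_eq_eq numeral_2_eq_2)
  then obtain p where p: "is_walk V E p" "hd p = x" "last p = v"
    using conn x unfolding connected_graph_def by blast
  have "p \<noteq> []"
    using p(1) by auto
  then have p_eq: "p = x # tl p"
    using p(2) by (cases p) auto
  then have "tl p \<noteq> []"
    using p(3) v(2) by (metis last_ConsL)
  then show thesis
    using p(1) p_eq that by (metis is_walk_Cons)
qed

section \<open>Paths in acyclic graphs\<close>

lemma has_cycle_if_chord:
  assumes p: "is_path V E p" and ij: "i + 2 \<le> j" "j < length p" and chord: "E (p ! j) (p ! i)"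
  shows "has_cycle V E"
proof -
  define c where "c = take (j - i + 1) (drop i p)"
  have len: "length c = j - i + 1"
    using ij unfolding c_def by simp
  have c_nth: "c ! k = p ! (i + k)" if "k < length c" for k
    using that len ij unfolding c_def by simp
  have "is_path V E c"
    using p ij unfolding c_def is_path_def is_walk_def
    by (auto dest: in_set_takeD in_set_dropD)
  moreover have "c \<noteq> []"
    using len by auto
  then have "hd c = p ! i" "last c = p ! j"
    using c_nth len ij by (simp_all add: hd_conv_nth last_conv_nth)
  ultimately show ?thesis
    unfolding has_cycle_def using len ij chord by auto
qed

lemma acyclic_path_adjacent:
  assumes sg: "simple_graph V E" and acyclic: "\<not> has_cycle V E" and p: "is_path V E p"
    and ij: "i < length p" "j < length p" and edge: "E (p ! i) (p ! j)"
  shows "i = Suc j \<or> j = Suc i"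
proof -
  have "i \<noteq> j"
    using edge sg unfolding simple_graph_def by auto
  moreover have "\<not> i + 2 \<le> j" "\<not> j + 2 \<le> i"
    using has_cycle_if_chord[OF p] edge acyclic ij sg unfolding simple_graph_def by blast+
  ultimately show ?thesis
    by linarith
qed

lemma has_cycle_if_min_degree_two:
  assumes sg: "simple_graph V E" and W: "W \<subseteq> V" "W \<noteq> {}"
    and deg: "\<forall>w\<in>W. \<exists>a\<in>W. \<exists>b\<in>W. a \<noteq> b \<and> E w a \<and> E w b"
  shows "has_cycle V E"
proof (rule ccontr)
  assume acyclic: "\<not> has_cycle V E"
  have "finite W"
    using sg W finite_subset unfolding simple_graph_def by blast
  obtain w where "w \<in> W"
    using W by blast
  then have "is_path V E [w] \<and> set [w] \<subseteq> W"
    using W by (auto simp: is_path_def)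
  moreover have "length p \<le> card W" if "is_path V E p \<and> set p \<subseteq> W" for p
    using that \<open>finite W\<close> by (metis card_mono distinct_card is_path_def)
  ultimately obtain p where p: "is_path V E p" "set p \<subseteq> W"
    and longest: "\<And>q. is_path V E q \<Longrightarrow> set q \<subseteq> W \<Longrightarrow> length q \<le> length p"
    using ex_has_greatest_nat[of "\<lambda>q. is_path V E q \<and> set q \<subseteq> W" "[w]" length "Suc (card W)"]
    by (metis le_imp_less_Suc)
  have "p \<noteq> []"
    using p by (auto simp: is_path_def)
  then have last_p: "last p = p ! (length p - 1)" and "last p \<in> W"
    using p by (auto simp: last_conv_nth)
  have "a = p ! (length p - 2)" if "a \<in> W" "E (last p) a" for a
  proof -
    have "a \<in> set p"
    proof (rule ccontr)
      assume "a \<notin> set p"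
      then have "is_path V E (p @ [a])"
        using that W p \<open>p \<noteq> []\<close> by (subst is_path_append) (auto simp: is_path_def)
      then show False
        using longest[of "p @ [a]"] p that by auto
    qed
    then obtain i where "i < length p" and "a = p ! i"
      by (metis in_set_conv_nth)
    moreover have "length p - 1 = Suc i \<or> i = Suc (length p - 1)"
      using acyclic_path_adjacent[OF sg acyclic p(1), of "length p - 1" i] that(2) last_p
        \<open>p \<noteq> []\<close> \<open>i < length p\<close> \<open>a = p ! i\<close> by simp
    ultimately have "i = length p - 2"
      by linarith
    then show ?thesis
      using \<open>a = p ! i\<close> by simp
  qed
  then show False
    using deg \<open>last p \<in> W\<close> by metis
qed

section \<open>Path covers\<close>

lemma is_path_restrict: "is_path V E p \<Longrightarrow> set p \<subseteq> U \<Longrightarrow> is_path U E p"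
  by (simp add: is_path_def is_walk_def)

lemma path_cover_is_path: "path_cover V E Q \<Longrightarrow> p \<in> Q \<Longrightarrow> is_path V E p"
  by (simp add: path_cover_def)

lemma path_cover_not_Nil: "path_cover V E Q \<Longrightarrow> p \<in> Q \<Longrightarrow> p \<noteq> []"
  by (auto simp: path_cover_def is_path_def)

lemma path_cover_subset: "path_cover V E Q \<Longrightarrow> p \<in> Q \<Longrightarrow> set p \<subseteq> V"
  by (auto simp: path_cover_def)

lemma path_cover_covers: "path_cover V E Q \<Longrightarrow> v \<in> V \<Longrightarrow> \<exists>p\<in>Q. v \<in> set p"
  by (auto simp: path_cover_def)

lemma path_cover_unique:
  "path_cover V E Q \<Longrightarrow> p \<in> Q \<Longrightarrow> q \<in> Q \<Longrightarrow> v \<in> set p \<Longrightarrow> v \<in> set q \<Longrightarrow> p = q"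
  unfolding path_cover_def by blast

lemma path_cover_disjoint:
  "path_cover V E Q \<Longrightarrow> p \<in> Q \<Longrightarrow> q \<in> Q \<Longrightarrow> p \<noteq> q \<Longrightarrow> set p \<inter> set q = {}"
  unfolding path_cover_def by blast

lemma inj_on_hd_path_cover: "path_cover V E Q \<Longrightarrow> inj_on hd Q"
  by (metis hd_in_set inj_onI path_cover_not_Nil path_cover_unique)

lemma path_cover_notin_other_hds:
  assumes "path_cover V E Q" "W \<in> Q" "e \<in> set W"
  shows "e \<notin> hd ` (Q - {W})"
proof
  assume "e \<in> hd ` (Q - {W})"
  then obtain q where q: "q \<in> Q" "q \<noteq> W" "e = hd q"
    by blast
  then have "e \<in> set q"
    using path_cover_not_Nil[OF assms(1)] by simp
  then show False
    using path_cover_unique[OF assms(1) q(1) assms(2)] q(2) assms(3) by blast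
qed

lemma finite_path_cover: "finite V \<Longrightarrow> path_cover V E Q \<Longrightarrow> finite Q"
proof -
  assume "finite V" "path_cover V E Q"
  then have "hd ` Q \<subseteq> V"
    using path_cover_not_Nil path_cover_subset by fastforce
  then show "finite Q"
    using \<open>finite V\<close> \<open>path_cover V E Q\<close>
    by (meson finite_imageD finite_subset inj_on_hd_path_cover)
qed

lemma path_cover_singleton: "is_path V E p \<Longrightarrow> path_cover (set p) E {p}"
  by (simp add: path_cover_def is_path_restrict)

lemma path_cover_pair:
  "is_path V E p \<Longrightarrow> is_path V E q \<Longrightarrow> set p \<inter> set q = {} \<Longrightarrow>
    path_cover (set p \<union> set q) E {p, q}"
  unfolding path_cover_def by (auto intro: is_path_restrict)

lemma path_cover_mono: "path_cover V E Q \<Longrightarrow> (\<And>a b. E a b \<Longrightarrow> E' a b) \<Longrightarrow> path_cover V E' Q"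
  unfolding path_cover_def using is_path_mono by blast

lemma path_cover_insert_singleton:
  assumes Q: "path_cover V E Q" and u: "u \<notin> V"
  shows "path_cover (insert u V) E (insert [u] Q)"
  unfolding path_cover_def
proof (intro conjI ballI impI)
  fix p
  assume "p \<in> insert [u] Q"
  moreover have "is_path (insert u V) E [u]"
    by (simp add: is_path_def)
  moreover have "is_path (insert u V) E p" if "p \<in> Q" for p
    using path_cover_is_path[OF Q that] by (rule is_path_mono) auto
  ultimately show "is_path (insert u V) E p"
    by blast
next
  have "set p \<inter> set [u] = {}" if "p \<in> Q" for p
    using Q u that path_cover_subset by fastforce
  then show "set p \<inter> set q = {}" if "p \<in> insert [u] Q" "q \<in> insert [u] Q" "p \<noteq> q" for p q
    using that path_cover_disjoint[OF Q] by (metis Int_commute insert_iff)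
next
  show "(\<Union>p\<in>insert [u] Q. set p) = insert u V"
    using Q unfolding path_cover_def by simp
qed

lemma path_cover_replace:
  assumes Q: "path_cover V E Q" and D: "D \<subseteq> Q" and N: "path_cover (\<Union>p\<in>D. set p) E N"
  shows "path_cover V E (Q - D \<union> N)"
  unfolding path_cover_def
proof (intro conjI ballI impI)
  have D_V: "(\<Union>p\<in>D. set p) \<subseteq> V"
    using Q D unfolding path_cover_def by blast
  show "is_path V E p" if "p \<in> Q - D \<union> N" for p
    using that path_cover_is_path[OF Q] path_cover_is_path[OF N] is_path_mono[OF _ D_V]
    by blast
  have new_old: "set p \<inter> set q = {}" if "p \<in> N" "q \<in> Q - D" for p q
  proof -
    have "set d \<inter> set q = {}" if "d \<in> D" for d
      using path_cover_disjoint[OF Q] D \<open>q \<in> Q - D\<close> that by blast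
    then show ?thesis
      using path_cover_subset[OF N \<open>p \<in> N\<close>] by blast
  qed
  show "set p \<inter> set q = {}" if "p \<in> Q - D \<union> N" "q \<in> Q - D \<union> N" "p \<noteq> q" for p q
    using that new_old[of p q] new_old[of q p] path_cover_disjoint[OF Q, of p q]
      path_cover_disjoint[OF N, of p q]
    by (auto simp: Int_commute)
  have "(\<Union>p\<in>N. set p) = (\<Union>p\<in>D. set p)"
    using N by (simp add: path_cover_def)
  then have "(\<Union>p\<in>Q - D \<union> N. set p) = (\<Union>p\<in>Q. set p)"
    using D by blast
  then show "(\<Union>p\<in>Q - D \<union> N. set p) = V"
    using Q by (simp add: path_cover_def)
qed

lemma card_path_cover_replace:
  assumes Q: "path_cover V E Q" "finite Q" and D: "D \<subseteq> Q" and N: "path_cover (\<Union>p\<in>D. set p) E N"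
  shows "finite N" and "card (Q - D \<union> N) + card D = card Q + card N"
proof -
  have "finite D"
    using D Q(2) finite_subset by blast
  then show "finite N"
    using N finite_path_cover by (metis finite_UN_I finite_set)
  have "(Q - D) \<inter> N = {}"
  proof (rule ccontr)
    assume "(Q - D) \<inter> N \<noteq> {}"
    then obtain p where p: "p \<in> Q - D" "p \<in> N"
      by blast
    then have "hd p \<in> set p"
      using N path_cover_not_Nil by (metis hd_in_set)
    then obtain d where "d \<in> D" "hd p \<in> set d"
      using N p(2) unfolding path_cover_def by blast
    then show False
      using path_cover_unique[OF Q(1)] D p(1) \<open>hd p \<in> set p\<close> by blast
  qed
  with \<open>finite N\<close> have "card (Q - D \<union> N) = card (Q - D) + card N"
    using Q(2) by (simp add: card_Un_disjoint)
  moreover have "card (Q - D) + card D = card Q"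
    using D Q(2) \<open>finite D\<close> by (simp add: card_Diff_subset card_mono)
  ultimately show "card (Q - D \<union> N) + card D = card Q + card N"
    by simp
qed

lemma min_path_cover_replace_card_le:
  assumes m: "min_path_cover V E Q" and D: "D \<subseteq> Q" and N: "path_cover (\<Union>p\<in>D. set p) E N"
  shows "card D \<le> card N"
proof -
  have c: "path_cover V E Q" and "finite Q"
    using m by (simp_all add: min_path_cover_def)
  then have "card Q \<le> card (Q - D \<union> N)"
    using m D N path_cover_replace unfolding min_path_cover_def by blast
  then show ?thesis
    using card_path_cover_replace(2)[OF c \<open>finite Q\<close> D N] by linarith
qed

lemma min_path_cover_replace:
  assumes m: "min_path_cover V E Q" and D: "D \<subseteq> Q" and N: "path_cover (\<Union>p\<in>D. set p) E N"
    and same_card: "card N = card D"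
  shows "min_path_cover V E (Q - D \<union> N)"
proof -
  have c: "path_cover V E Q" and "finite Q"
    using m by (simp_all add: min_path_cover_def)
  have "card (Q - D \<union> N) = card Q"
    using card_path_cover_replace(2)[OF c \<open>finite Q\<close> D N] same_card by linarith
  moreover have "finite (Q - D \<union> N)"
    using card_path_cover_replace(1)[OF c \<open>finite Q\<close> D N] \<open>finite Q\<close> by simp
  ultimately show ?thesis
    using m path_cover_replace[OF c D N] unfolding min_path_cover_def by simp
qed

lemma min_path_cover_no_join:
  assumes m: "min_path_cover V E Q" and pq: "p \<in> Q" "q \<in> Q" "p \<noteq> q"
  shows "\<not> E (last p) (hd q)"
proof
  assume edge: "E (last p) (hd q)"
  have c: "path_cover V E Q"
    using m by (simp add: min_path_cover_def)
  have "set p \<inter> set q = {}"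
    using c pq path_cover_disjoint by blast
  moreover have "is_path V E p" "is_path V E q" "p \<noteq> []" "q \<noteq> []"
    using c pq path_cover_is_path path_cover_not_Nil by blast+
  ultimately have "is_path V E (p @ q)"
    using is_path_append edge by blast
  then have "path_cover (\<Union>r\<in>{p, q}. set r) E {p @ q}"
    using path_cover_singleton[of V E "p @ q"] by simp
  then have "card {p, q} \<le> card {p @ q}"
    by (rule min_path_cover_replace_card_le[OF m, rotated]) (simp add: pq)
  then show False
    using pq(3) by simp
qed

lemma min_path_cover_swap:
  assumes m: "min_path_cover V E Q" and pq: "p \<in> Q" "q \<in> Q" "p \<noteq> q"
    and new: "is_path V E p'" "is_path V E q'" "set p' \<inter> set q' = {}"
    and same: "set p' \<union> set q' = set p \<union> set q"
  shows "min_path_cover V E (Q - {p, q} \<union> {p', q'})"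
proof (rule min_path_cover_replace[OF m])
  have "p' \<noteq> q'"
    using new by (auto simp: is_path_def)
  then show "card {p', q'} = card {p, q}"
    using pq by simp
  show "{p, q} \<subseteq> Q"
    using pq by simp
  show "path_cover (\<Union>r\<in>{p, q}. set r) E {p', q'}"
    using path_cover_pair[OF new] same by simp
qed

lemma min_path_cover_move_suffix:
  assumes m: "min_path_cover V E Q" and p: "p \<in> Q" "R1 @ R2 \<in> Q" "p \<noteq> R1 @ R2"
    and R: "R1 \<noteq> []" "R2 \<noteq> []" and edge: "E (last p) (hd R2)"
  shows "min_path_cover V E (Q - {p, R1 @ R2} \<union> {p @ R2, R1})"
proof (rule min_path_cover_swap[OF m p])
  have c: "path_cover V E Q"
    using m by (simp add: min_path_cover_def)
  show R1: "is_path V E R1"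
    using path_cover_is_path[OF c p(2)] is_path_append[OF R] by blast
  have R2: "is_path V E R2" and "set R1 \<inter> set R2 = {}"
    using path_cover_is_path[OF c p(2)] is_path_append[OF R] by blast+
  moreover have "set p \<inter> set R1 = {}" "set p \<inter> set R2 = {}"
    using path_cover_disjoint[OF c p] by auto
  moreover have "is_path V E p" "p \<noteq> []"
    using c p(1) path_cover_is_path path_cover_not_Nil by blast+
  ultimately show "is_path V E (p @ R2)" "set (p @ R2) \<inter> set R1 = {}"
    using is_path_append[OF \<open>p \<noteq> []\<close> R(2)] edge by auto
  show "set (p @ R2) \<union> set R1 = set p \<union> set (R1 @ R2)"
    by auto
qed

lemma min_path_cover_move_prefix:
  assumes m: "min_path_cover V E Q" and p: "R1 @ R2 \<in> Q" "p \<in> Q" "R1 @ R2 \<noteq> p"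
    and R: "R1 \<noteq> []" "R2 \<noteq> []" and edge: "E (last R1) (hd p)"
  shows "min_path_cover V E (Q - {R1 @ R2, p} \<union> {R1 @ p, R2})"
proof (rule min_path_cover_swap[OF m p])
  have c: "path_cover V E Q"
    using m by (simp add: min_path_cover_def)
  show R2: "is_path V E R2"
    using path_cover_is_path[OF c p(1)] is_path_append[OF R] by blast
  have R1: "is_path V E R1" and "set R1 \<inter> set R2 = {}"
    using path_cover_is_path[OF c p(1)] is_path_append[OF R] by blast+
  moreover have "set R1 \<inter> set p = {}" "set p \<inter> set R2 = {}"
    using path_cover_disjoint[OF c p] by auto
  moreover have "is_path V E p" "p \<noteq> []"
    using c p(2) path_cover_is_path path_cover_not_Nil by blast+
  ultimately show "is_path V E (R1 @ p)" "set (R1 @ p) \<inter> set R2 = {}"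
    using is_path_append[OF R(1) \<open>p \<noteq> []\<close>] edge by auto
  show "set (R1 @ p) \<union> set R2 = set (R1 @ R2) \<union> set p"
    by auto
qed

section \<open>Zero forcing sets and path covers\<close>

definition induced :: "('a \<Rightarrow> 'a \<Rightarrow> bool) \<Rightarrow> 'a set \<Rightarrow> 'a \<Rightarrow> 'a \<Rightarrow> bool" where
  "induced E A a b \<longleftrightarrow> E a b \<and> a \<in> A \<and> b \<in> A"

definition forces :: "'a set \<Rightarrow> ('a \<Rightarrow> 'a \<Rightarrow> bool) \<Rightarrow> 'a set \<Rightarrow> 'a \<Rightarrow> 'a \<Rightarrow> bool" where
  "forces V E S u v \<longleftrightarrow> u \<in> S \<and> v \<in> V - S \<and> E u v \<and> (\<forall>w\<in>V. E u w \<and> w \<noteq> v \<longrightarrow> w \<in> S)"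

lemma simple_graph_induced: "simple_graph V E \<Longrightarrow> A \<subseteq> V \<Longrightarrow> simple_graph A (induced E A)"
  unfolding simple_graph_def induced_def by (auto intro: finite_subset)

lemma zero_forcing_set_obtain_force:
  assumes "zero_forcing_set V E S" "S \<noteq> V"
  obtains u v where "forces V E S u v"
proof -
  have "w \<in> S" if "active V E S w" "\<nexists>u v. forces V E S u v" for w
    using that
  proof (induction rule: active.induct)
    case (force u v)
    then show ?case
      unfolding forces_def by blast
  qed
  then show thesis
    using assms that unfolding zero_forcing_set_def by blast
qed

lemma zero_forcing_set_delete_forcer:
  assumes zf: "zero_forcing_set V E S" and uv: "forces V E S u v"
  shows "zero_forcing_set (V - {u}) (induced E (V - {u})) (insert v (S - {u}))"
proof -
  let ?A = "V - {u}" and ?S = "insert v (S - {u})"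
  have "w \<noteq> u \<longrightarrow> active ?A (induced E ?A) ?S w" if "active V E S w" for w
    using that
  proof (induction rule: active.induct)
    case (init w)
    then show ?case
      by (simp add: active.init)
  next
    case (force u' w)
    show ?case
    proof
      assume "w \<noteq> u"
      show "active ?A (induced E ?A) ?S w"
      proof (cases "u' = u")
        case True
        have "w \<in> V" "E u w"
          using force.hyps(3,4) True by simp_all
        then have "w \<in> ?S"
          using uv \<open>w \<noteq> u\<close> unfolding forces_def by blast
        then show ?thesis
          by (rule active.init)
      next
        case False
        show ?thesis
        proof (rule active.force[of u'])
          show "active ?A (induced E ?A) ?S u'"
            using force.IH(1) False by simp
          show "u' \<in> ?A" "w \<in> ?A" "induced E ?A u' w"
            using force.hyps False \<open>w \<noteq> u\<close> by (auto simp: induced_def)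
          show "\<forall>w'\<in>?A. induced E ?A u' w' \<and> w' \<noteq> w \<longrightarrow> active ?A (induced E ?A) ?S w'"
          proof (intro ballI impI)
            fix w'
            assume "w' \<in> ?A" "induced E ?A u' w' \<and> w' \<noteq> w"
            then have "w' \<in> V" "w' \<noteq> u" "E u' w'" "w' \<noteq> w"
              by (simp_all add: induced_def)
            then show "active ?A (induced E ?A) ?S w'"
              using force.IH(2) by blast
          qed
        qed
      qed
    qed
  qed
  then show ?thesis
    using zf uv unfolding zero_forcing_set_def forces_def by auto
qed

lemma path_cover_Cons:
  assumes Q: "path_cover (V - {u}) E Q" and u: "u \<in> V" and p: "p \<in> Q" and edge: "E u (hd p)"
  shows "path_cover V E (Q - {p} \<union> {u # p})"
proof -
  have Q1: "path_cover V E (insert [u] Q)"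
    using path_cover_insert_singleton[OF Q, of u] u by (simp add: insert_absorb)
  have "u \<notin> set p"
    using path_cover_subset[OF Q p] by blast
  moreover have "p \<noteq> []" "is_path V E p"
    using p path_cover_not_Nil[OF Q1] path_cover_is_path[OF Q1] by auto
  ultimately have "is_path V E ([u] @ p)"
    using is_path_append[of "[u]" p V E] u edge by (simp add: is_path_def)
  then have "path_cover (\<Union>r\<in>{[u], p}. set r) E {u # p}"
    using path_cover_singleton[of V E "u # p"] by simp
  then have "path_cover V E (insert [u] Q - {[u], p} \<union> {u # p})"
    by (rule path_cover_replace[OF Q1, rotated]) (simp add: p)
  moreover have "[u] \<notin> Q"
    using path_cover_subset[OF Q, of "[u]"] by auto
  then have "insert [u] Q - {[u], p} = Q - {p}"
    by auto
  ultimately show ?thesis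
    by simp
qed

text \<open>Delete a vertex u that can force some v: in the remaining graph v takes the place of u in
  the zero forcing set, and u is then prepended to the path starting at v.\<close>

lemma path_cover_of_zero_forcing_set:
  assumes "finite V" "zero_forcing_set V E S"
  shows "\<exists>Q. path_cover V E Q \<and> hd ` Q = S"
  using assms
proof (induction "card V" arbitrary: V E S rule: less_induct)
  case less
  show ?case
  proof (cases "S = V")
    case True
    have "path_cover V E ((\<lambda>v. [v]) ` V)"
      unfolding path_cover_def by (auto simp: is_path_def)
    moreover have "hd ` (\<lambda>v. [v]) ` V = S"
      using True by (simp add: image_image)
    ultimately show ?thesis
      by blast
  next
    case False
    then obtain u v where uv: "forces V E S u v"
      using zero_forcing_set_obtain_force less.prems(2) by blast
    have u: "u \<in> V" "u \<in> S" and v: "v \<notin> S" "E u v"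
      using uv less.prems(2) unfolding forces_def zero_forcing_set_def by auto
    let ?A = "V - {u}"
    have "card ?A < card V"
      using card_Diff1_less[OF less.prems(1) u(1)] .
    then obtain Q where Q: "path_cover ?A (induced E ?A) Q" "hd ` Q = insert v (S - {u})"
      using less.hyps zero_forcing_set_delete_forcer[OF less.prems(2) uv] less.prems(1)
      by (meson finite_Diff)
    obtain p where p: "p \<in> Q" "hd p = v"
      using Q(2) by (metis image_iff insertI1)
    have "path_cover ?A E Q"
      using Q(1) by (rule path_cover_mono) (simp add: induced_def)
    then have "path_cover V E (Q - {p} \<union> {u # p})"
      using path_cover_Cons u(1) p v(2) by metis
    moreover have "hd ` (Q - {p}) = hd ` Q - {v}"
      using inj_on_hd_path_cover[OF Q(1)] p by (simp add: inj_on_image_set_diff)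
    then have "hd ` (Q - {p} \<union> {u # p}) = S"
      using Q(2) u v by auto
    ultimately show ?thesis
      by blast
  qed
qed

lemma card_min_path_cover_le_zero_forcing_set:
  assumes "finite V" "min_path_cover V E Q" "zero_forcing_set V E S"
  shows "card Q \<le> card S"
proof -
  obtain Q' where Q': "path_cover V E Q'" "hd ` Q' = S"
    using path_cover_of_zero_forcing_set assms(1,3) by blast
  then have "card S = card Q'"
    using inj_on_hd_path_cover card_image by metis
  then show ?thesis
    using assms(2) Q'(1) unfolding min_path_cover_def by simp
qed

lemma active_induced_lift:
  assumes "active A (induced E A) S' v" "A \<subseteq> V"
    and init: "\<And>s. s \<in> S' \<Longrightarrow> active V E S s"
    and outside: "\<And>u w. u \<in> A \<Longrightarrow> w \<in> V - A \<Longrightarrow> E u w \<Longrightarrow> active V E S w"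
  shows "active V E S v"
  using assms(1)
proof (induction rule: active.induct)
  case (init v)
  then show ?case
    using assms(3) by blast
next
  case (force u v)
  show ?case
  proof (rule active.force[of u])
    show "u \<in> V" "active V E S u" "v \<in> V" "E u v"
      using force assms(2) by (auto simp: induced_def)
    show "\<forall>w\<in>V. E u w \<and> w \<noteq> v \<longrightarrow> active V E S w"
    proof (intro ballI impI)
      fix w
      assume "w \<in> V" "E u w \<and> w \<noteq> v"
      then show "active V E S w"
        using force outside by (cases "w \<in> A") (auto simp: induced_def)
    qed
  qed
qed

text \<open>In a forest a path is an induced subgraph, so the only other neighbour of R ! k on R is
  R ! (k - 1).\<close>

lemma active_along_path:
  assumes sg: "simple_graph V E" and acyclic: "\<not> has_cycle V E" and R: "is_path V E R"
    and start: "active V E S (hd R)" and k: "k < length R"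
    and outside: "\<And>i w. i < k \<Longrightarrow> w \<in> V - set R \<Longrightarrow> E (R ! i) w \<Longrightarrow> active V E S w"
  shows "active V E S (R ! k)"
proof -
  have "\<forall>i\<le>k. active V E S (R ! i)"
    using k outside
  proof (induction k)
    case 0
    then show ?case
      using start R by (simp add: hd_conv_nth is_path_def)
  next
    case (Suc k)
    have prefix: "\<forall>i\<le>k. active V E S (R ! i)"
    proof (rule Suc.IH)
      show "k < length R"
        using Suc.prems(1) by simp
      show "active V E S w" if "i < k" "w \<in> V - set R" "E (R ! i) w" for i w
        using Suc.prems(2)[of i w] that by simp
    qed
    have "active V E S (R ! Suc k)"
    proof (rule active.force[of "R ! k"])
      show "R ! k \<in> V" "active V E S (R ! k)" "R ! Suc k \<in> V" "E (R ! k) (R ! Suc k)"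
        using R Suc.prems(1) prefix unfolding is_path_def is_walk_def by auto
      show "\<forall>w\<in>V. E (R ! k) w \<and> w \<noteq> R ! Suc k \<longrightarrow> active V E S w"
      proof (intro ballI impI)
        fix w
        assume w: "w \<in> V" "E (R ! k) w \<and> w \<noteq> R ! Suc k"
        show "active V E S w"
        proof (cases "w \<in> set R")
          case True
          then obtain j where j: "j < length R" "w = R ! j"
            by (metis in_set_conv_nth)
          then have "k = Suc j"
            using acyclic_path_adjacent[OF sg acyclic R, of k j] w Suc.prems(1) by auto
          then show ?thesis
            using prefix j by simp
        next
          case False
          then show ?thesis
            using Suc.prems(2) w by blast
        qed
      qed
    qed
    then show ?case
      using prefix le_Suc_eq by blast
  qed
  then show ?thesis
    by simp
qed

definition edge_boundary :: "'a set \<Rightarrow> ('a \<Rightarrow> 'a \<Rightarrow> bool) \<Rightarrow> 'a set \<Rightarrow> ('a \<times> 'a) set" where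
  "edge_boundary V E A = {(a, b). a \<in> A \<and> b \<in> V - A \<and> E a b}"

definition attached :: "'a set \<Rightarrow> ('a \<Rightarrow> 'a \<Rightarrow> bool) \<Rightarrow> 'a list \<Rightarrow> nat \<Rightarrow> bool" where
  "attached V E R i \<longleftrightarrow> i < length R \<and> (\<exists>b\<in>V - set R. E (R ! i) b)"

definition attachment_span :: "'a set \<Rightarrow> ('a \<Rightarrow> 'a \<Rightarrow> bool) \<Rightarrow> 'a list set \<Rightarrow> 'a set" where
  "attachment_span V E P =
    {R ! j | R j. R \<in> P \<and> (\<exists>i\<le>j. attached V E R i) \<and> (\<exists>l\<ge>j. attached V E R l)}"

lemma attachment_span_subset: "path_cover V E P \<Longrightarrow> attachment_span V E P \<subseteq> V"
  unfolding attachment_span_def attached_def by (fastforce dest: path_cover_subset)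

lemma attachment_span_if_edge_boundary:
  assumes sg: "simple_graph V E" and P: "path_cover V E P" and R: "R \<in> P"
    and ab: "(a, b) \<in> edge_boundary V E (set R)"
  shows "b \<in> attachment_span V E P"
proof -
  have ab: "a \<in> set R" "b \<in> V" "b \<notin> set R" "E b a" "a \<in> V"
    using ab sg unfolding edge_boundary_def simple_graph_def by auto
  obtain Rb where Rb: "Rb \<in> P" "b \<in> set Rb"
    using path_cover_covers[OF P ab(2)] by blast
  then obtain m where m: "m < length Rb" "Rb ! m = b"
    by (metis in_set_conv_nth)
  have "a \<notin> set Rb"
    using path_cover_unique[OF P Rb(1) R] ab(1,3) Rb(2) by blast
  then have "attached V E Rb m"
    unfolding attached_def using m ab(4,5) by blast
  then show ?thesis
    unfolding attachment_span_def using Rb(1) m by blast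
qed

lemma attachment_span_pred:
  assumes sg: "simple_graph V E" and P: "path_cover V E P" and R: "R \<in> P"
    and before: "attached V E R i" "i < j" and after: "attached V E R l" "j \<le> l"
  shows "R ! (j - 1) \<in> attachment_span V E P \<and> E (R ! j) (R ! (j - 1))"
proof -
  have "Suc (j - 1) < length R"
    using before(2) after unfolding attached_def by simp
  then have "E (R ! (j - 1)) (R ! j)"
    using path_cover_is_path[OF P R] before(2) unfolding is_path_def is_walk_def
    by (metis Suc_pred' bot_nat_0.extremum_strict linorder_neqE_nat)
  moreover have "i \<le> j - 1" "j - 1 \<le> l"
    using before(2) after(2) by simp_all
  ultimately show ?thesis
    using R before(1) after(1) sg unfolding attachment_span_def simple_graph_def by blast
qed

lemma attachment_span_succ:
  assumes P: "path_cover V E P" and R: "R \<in> P"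
    and before: "attached V E R i" "i \<le> j" and after: "attached V E R l" "j < l"
  shows "R ! Suc j \<in> attachment_span V E P \<and> E (R ! j) (R ! Suc j)"
proof -
  have "Suc j < length R"
    using after unfolding attached_def by simp
  then have "E (R ! j) (R ! Suc j)"
    using path_cover_is_path[OF P R] unfolding is_path_def is_walk_def by blast
  moreover have "i \<le> Suc j" "Suc j \<le> l"
    using before(2) after(2) by simp_all
  ultimately show ?thesis
    using R before(1) after(1) unfolding attachment_span_def by blast
qed

lemma attachment_span_two_neighbours:
  assumes sg: "simple_graph V E" and P: "path_cover V E P" and R: "R \<in> P"
    and two_edges: "\<exists>e\<in>edge_boundary V E (set R). \<exists>e'\<in>edge_boundary V E (set R). e \<noteq> e'"
    and before: "attached V E R i" "i \<le> j" and after: "attached V E R l" "j \<le> l"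
  shows "\<exists>x\<in>attachment_span V E P. \<exists>y\<in>attachment_span V E P. x \<noteq> y \<and> E (R ! j) x \<and> E (R ! j) y"
proof -
  let ?W = "attachment_span V E P"
  have j: "j < length R"
    using after unfolding attached_def by simp
  have outside: "\<exists>b\<in>?W - set R. E (R ! j) b" if "attached V E R j"
    using that attachment_span_if_edge_boundary[OF sg P R, of "R ! j"]
    unfolding attached_def edge_boundary_def by auto
  consider (both) i' l' where "attached V E R i'" "i' < j" "attached V E R l'" "j < l'"
    | (left_end) i' where "attached V E R i'" "i' < j" "attached V E R j"
    | (right_end) l' where "attached V E R l'" "j < l'" "attached V E R j"
    | (only) "\<forall>k. attached V E R k \<longrightarrow> k = j"
    using before after by (metis le_neq_implies_less linorder_neqE_nat)
  then show ?thesis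
  proof cases
    case (both i' l')
    have "Suc j < length R" "distinct R"
      using both(3,4) path_cover_is_path[OF P R] unfolding attached_def is_path_def by simp_all
    then have "R ! (j - 1) \<noteq> R ! Suc j"
      by (simp add: nth_eq_iff_index_eq)
    then show ?thesis
      using attachment_span_pred[OF sg P R both(1,2) after] attachment_span_succ[OF P R before both(3,4)]
      by blast
  next
    case (left_end i')
    obtain b where "b \<in> ?W - set R" "E (R ! j) b"
      using outside left_end(3) by blast
    moreover have "R ! (j - 1) \<in> set R"
      using j by simp
    ultimately show ?thesis
      using attachment_span_pred[OF sg P R left_end(1,2) after] by (metis DiffE)
  next
    case (right_end l')
    obtain b where "b \<in> ?W - set R" "E (R ! j) b"
      using outside right_end(3) by blast
    moreover have "R ! Suc j \<in> set R"
      using right_end(1,2) unfolding attached_def by simp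
    ultimately show ?thesis
      using attachment_span_succ[OF P R before right_end(1,2)] by (metis DiffE)
  next
    case only
    obtain e e' where ee': "e \<in> edge_boundary V E (set R)" "e' \<in> edge_boundary V E (set R)" "e \<noteq> e'"
      using two_edges by blast
    have "fst e'' = R ! j" if e'': "e'' \<in> edge_boundary V E (set R)" for e''
    proof -
      obtain a b where "e'' = (a, b)" "a \<in> set R" "b \<in> V - set R" "E a b"
        using e'' unfolding edge_boundary_def by auto
      moreover obtain k where "k < length R" "a = R ! k"
        using \<open>a \<in> set R\<close> by (metis in_set_conv_nth)
      ultimately show ?thesis
        using only unfolding attached_def by auto
    qed
    then have "fst e = R ! j" "fst e' = R ! j"
      using ee' by blast+
    then have "snd e \<noteq> snd e'"
      using ee'(3) by (simp add: prod_eq_iff)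
    moreover have "E (fst e) (snd e)" "E (fst e') (snd e')"
      using ee'(1,2) unfolding edge_boundary_def by auto
    then have "E (R ! j) (snd e)" "E (R ! j) (snd e')"
      using \<open>fst e = R ! j\<close> \<open>fst e' = R ! j\<close> by simp_all
    moreover have "snd e \<in> ?W" "snd e' \<in> ?W"
      using ee' attachment_span_if_edge_boundary[OF sg P R] by (metis prod.collapse)+
    ultimately show ?thesis
      by blast
  qed
qed

text \<open>Contracting the paths of a cover of a forest gives a forest, which has a leaf. Without
  contracting: otherwise every vertex of the attachment span would have two neighbours in it.\<close>

lemma path_cover_has_pendant_path:
  assumes sg: "simple_graph V E" and acyclic: "\<not> has_cycle V E"
    and P: "path_cover V E P" "P \<noteq> {}"
  obtains R e where "R \<in> P" "edge_boundary V E (set R) \<subseteq> {e}"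
proof -
  have "\<exists>R\<in>P. \<exists>e. edge_boundary V E (set R) \<subseteq> {e}"
  proof (rule ccontr)
    assume "\<not> ?thesis"
    then have two_edges: "\<exists>e\<in>edge_boundary V E (set R). \<exists>e'\<in>edge_boundary V E (set R). e \<noteq> e'"
      if "R \<in> P" for R
      using that by blast
    then have "attachment_span V E P \<noteq> {}"
      using P(2) attachment_span_if_edge_boundary[OF sg P(1)] by fast
    moreover have "\<exists>x\<in>attachment_span V E P. \<exists>y\<in>attachment_span V E P. x \<noteq> y \<and> E w x \<and> E w y"
      if "w \<in> attachment_span V E P" for w
      using that attachment_span_two_neighbours[OF sg P(1) _ two_edges]
      unfolding attachment_span_def by blast
    ultimately have "has_cycle V E"
      using has_cycle_if_min_degree_two[OF sg attachment_span_subset[OF P(1)]] by blast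
    then show False
      using acyclic by blast
  qed
  then show thesis
    using that by blast
qed

lemma is_path_induced: "is_path V E p \<Longrightarrow> set p \<subseteq> A \<Longrightarrow> is_path A (induced E A) p"
  unfolding is_path_def is_walk_def induced_def by (auto dest: Suc_lessD)

lemma path_cover_Diff_induced:
  assumes P: "path_cover V E P" and R: "R \<in> P"
  shows "path_cover (V - set R) (induced E (V - set R)) (P - {R})"
  unfolding path_cover_def
proof (intro conjI ballI impI)
  fix R'
  assume R': "R' \<in> P - {R}"
  then have "set R' \<subseteq> V - set R"
    using path_cover_subset[OF P, of R'] path_cover_disjoint[OF P, of R' R] R by auto
  then show "is_path (V - set R) (induced E (V - set R)) R'"
    using path_cover_is_path[OF P, of R'] R' is_path_induced by blast
next
  show "set p \<inter> set q = {}" if "p \<in> P - {R}" "q \<in> P - {R}" "p \<noteq> q" for p q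
    using path_cover_disjoint[OF P, of p q] that by simp
next
  have "(\<Union>p\<in>P. set p) = V"
    using P by (simp add: path_cover_def)
  moreover have "set p \<inter> set R = {}" if "p \<in> P - {R}" for p
    using path_cover_disjoint[OF P, of p R] R that by simp
  ultimately show "(\<Union>p\<in>P - {R}. set p) = V - set R"
    using R by blast
qed

text \<open>The vertices of R up to the one attached to the rest are forced along R, then the rest
  is forced as in the smaller forest, and finally the remainder of R.\<close>

lemma zero_forcing_set_extend_pendant_path:
  assumes sg: "simple_graph V E" and acyclic: "\<not> has_cycle V E" and S: "S \<subseteq> V"
    and R: "is_path V E R" "hd R \<in> S" and pendant: "edge_boundary V E (set R) \<subseteq> {e}"
    and zf: "zero_forcing_set (V - set R) (induced E (V - set R)) (S - set R)"
  shows "zero_forcing_set V E S"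
proof -
  let ?A = "V - set R"
  have along: "active V E S (R ! k)"
    if "k < length R" "\<And>i w. i < k \<Longrightarrow> w \<in> ?A \<Longrightarrow> E (R ! i) w \<Longrightarrow> active V E S w" for k
    using active_along_path[OF sg acyclic R(1) active.init[OF R(2)]] that by blast
  have rest: "active V E S v" if "v \<in> ?A" for v
  proof (rule active_induced_lift)
    show "active ?A (induced E ?A) (S - set R) v"
      using zf that unfolding zero_forcing_set_def by blast
    show "?A \<subseteq> V" "\<And>s. s \<in> S - set R \<Longrightarrow> active V E S s"
      by (auto intro: active.init)
    show "active V E S w" if uw: "u \<in> ?A" "w \<in> V - ?A" "E u w" for u w
    proof -
      have "w \<in> set R"
        using uw(2) by blast
      then obtain k where k: "k < length R" "w = R ! k"
        by (metis in_set_conv_nth)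
      have "(w, u) \<in> edge_boundary V E (set R)"
        using uw sg unfolding edge_boundary_def simple_graph_def by auto
      then have e: "e = (R ! k, u)"
        using pendant k(2) by blast
      have "\<not> E (R ! i) w'" if "i < k" "w' \<in> ?A" for i w'
      proof
        assume "E (R ! i) w'"
        then have "(R ! i, w') \<in> edge_boundary V E (set R)"
          using that k unfolding edge_boundary_def by auto
        then have "R ! i = R ! k"
          using pendant e by auto
        then show False
          using R(1) k(1) \<open>i < k\<close> unfolding is_path_def by (simp add: nth_eq_iff_index_eq)
      qed
      then show ?thesis
        using along[OF k(1)] k(2) by blast
    qed
  qed
  have "active V E S v" if v: "v \<in> set R" for v
  proof -
    obtain k where k: "k < length R" "v = R ! k"
      using v by (metis in_set_conv_nth)
    have "active V E S (R ! k)"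
      by (rule along[OF k(1)]) (simp add: rest)
    then show ?thesis
      using k(2) by simp
  qed
  then show ?thesis
    using rest S unfolding zero_forcing_set_def by blast
qed

lemma zero_forcing_set_of_path_cover_ends:
  assumes "simple_graph V E" "\<not> has_cycle V E" "path_cover V E P" "S \<subseteq> V"
    "\<And>R. R \<in> P \<Longrightarrow> hd R \<in> S \<or> last R \<in> S"
  shows "zero_forcing_set V E S"
  using assms
proof (induction "card V" arbitrary: V E P S rule: less_induct)
  case less
  note sg = less.prems(1) and acyclic = less.prems(2) and P = less.prems(3) and ends = less.prems(5)
  show ?case
  proof (cases "P = {}")
    case True
    then show ?thesis
      using P less.prems(4) unfolding path_cover_def zero_forcing_set_def by simp
  next
    case False
    then obtain R e where R: "R \<in> P" and pendant: "edge_boundary V E (set R) \<subseteq> {e}"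
      using path_cover_has_pendant_path[OF sg acyclic P] by blast
    have sym: "\<And>a b. E a b \<Longrightarrow> E b a"
      using sg unfolding simple_graph_def by blast
    obtain R0 where R0: "is_path V E R0" "set R0 = set R" "hd R0 \<in> S"
    proof (cases "hd R \<in> S")
      case True
      then show thesis
        using that path_cover_is_path[OF P R] by blast
    next
      case False
      then have "hd (rev R) \<in> S"
        using ends[OF R] path_cover_not_Nil[OF P R] by (simp add: hd_rev)
      then show thesis
        using that is_path_rev[OF sym path_cover_is_path[OF P R]] by simp
    qed
    let ?A = "V - set R"
    have "hd R \<in> set R" "set R \<subseteq> V"
      using path_cover_subset[OF P R] path_cover_not_Nil[OF P R] by auto
    then have "?A \<subset> V"
      by blast
    then have "card ?A < card V"
      using sg unfolding simple_graph_def by (simp add: psubset_card_mono)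
    moreover have "simple_graph ?A (induced E ?A)" "\<not> has_cycle ?A (induced E ?A)"
      using simple_graph_induced[OF sg] has_cycle_mono[of ?A "induced E ?A" V E] acyclic
      by (auto simp: induced_def)
    moreover have cover: "path_cover ?A (induced E ?A) (P - {R})"
      using path_cover_Diff_induced[OF P R] .
    moreover have "S - set R \<subseteq> ?A"
      using less.prems(4) by blast
    moreover have "hd R' \<in> S - set R \<or> last R' \<in> S - set R" if "R' \<in> P - {R}" for R'
    proof -
      have "hd R' \<in> set R'" "last R' \<in> set R'"
        using path_cover_not_Nil[OF cover that] by simp_all
      then have "hd R' \<in> ?A" "last R' \<in> ?A"
        using path_cover_subset[OF cover that] by blast+
      then show ?thesis
        using ends[of R'] that by auto
    qed
    ultimately have "zero_forcing_set ?A (induced E ?A) (S - set R)"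
      using less.hyps[of ?A "induced E ?A" "P - {R}" "S - set R"] by blast
    then show ?thesis
      using zero_forcing_set_extend_pendant_path[OF sg acyclic less.prems(4) R0(1,3)] pendant R0(2)
      by simp
  qed
qed

lemma min_zero_forcing_set_of_min_path_cover:
  assumes sg: "simple_graph V E" and acyclic: "\<not> has_cycle V E" and m: "min_path_cover V E Q"
    and W: "W \<in> Q" and e: "e = hd W \<or> e = last W"
  shows "min_zero_forcing_set V E (insert e (hd ` (Q - {W})))"
proof -
  have c: "path_cover V E Q" and "finite Q"
    using m by (simp_all add: min_path_cover_def)
  let ?S = "insert e (hd ` (Q - {W}))"
  have "e \<in> set W"
    using e path_cover_not_Nil[OF c W] by auto
  have "hd p \<in> set p" "set p \<subseteq> V" if "p \<in> Q" for p
    using that path_cover_not_Nil[OF c] path_cover_subset[OF c] by auto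
  then have "?S \<subseteq> V"
    using \<open>e \<in> set W\<close> path_cover_subset[OF c W] by blast
  then have zf: "zero_forcing_set V E ?S"
    by (rule zero_forcing_set_of_path_cover_ends[OF sg acyclic c]) (use e in auto)
  have "e \<notin> hd ` (Q - {W})"
    using path_cover_notin_other_hds[OF c W \<open>e \<in> set W\<close>] .
  moreover have "card Q > 0"
    using W \<open>finite Q\<close> card_gt_0_iff by blast
  ultimately have "card ?S = card Q"
    using card_image[OF inj_on_subset[OF inj_on_hd_path_cover[OF c]]] \<open>finite Q\<close> W
    by (simp add: card_Diff_subset)
  moreover have "card Q \<le> card S'" if "zero_forcing_set V E S'" for S'
    using card_min_path_cover_le_zero_forcing_set[OF _ m that] sg
    unfolding simple_graph_def by blast
  ultimately show ?thesis
    using zf unfolding min_zero_forcing_set_def by simp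
qed

section \<open>Endpoints of paths in a minimum path cover\<close>

definition neighbours :: "'a set \<Rightarrow> ('a \<Rightarrow> 'a \<Rightarrow> bool) \<Rightarrow> 'a \<Rightarrow> 'a set" where
  "neighbours V E v = {w \<in> V. E v w}"

definition degree :: "'a set \<Rightarrow> ('a \<Rightarrow> 'a \<Rightarrow> bool) \<Rightarrow> 'a \<Rightarrow> nat" where
  "degree V E v = card (neighbours V E v)"

lemma automorphism_degree:
  assumes phi: "automorphism V E \<phi>" and v: "v \<in> V"
  shows "degree V E (\<phi> v) = degree V E v"
proof -
  have bij: "bij_betw \<phi> V V" and adj: "\<And>u w. u \<in> V \<Longrightarrow> w \<in> V \<Longrightarrow> E u w \<longleftrightarrow> E (\<phi> u) (\<phi> w)"
    using phi unfolding automorphism_def by auto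
  have "\<phi> ` neighbours V E v = neighbours V E (\<phi> v)"
  proof
    show "\<phi> ` neighbours V E v \<subseteq> neighbours V E (\<phi> v)"
      using v bij adj unfolding neighbours_def bij_betw_def by auto
    show "neighbours V E (\<phi> v) \<subseteq> \<phi> ` neighbours V E v"
    proof
      fix x
      assume "x \<in> neighbours V E (\<phi> v)"
      then have "x \<in> V" "E (\<phi> v) x"
        by (simp_all add: neighbours_def)
      moreover obtain w where "w \<in> V" "x = \<phi> w"
        using bij \<open>x \<in> V\<close> unfolding bij_betw_def by blast
      ultimately show "x \<in> \<phi> ` neighbours V E v"
        using adj[OF v \<open>w \<in> V\<close>] unfolding neighbours_def by auto
    qed
  qed
  moreover have "inj_on \<phi> (neighbours V E v)"
    using bij unfolding bij_betw_def neighbours_def by (auto intro: inj_on_subset)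
  ultimately show ?thesis
    unfolding degree_def by (metis card_image)
qed

lemma automorphism_card_degree_filter:
  assumes phi: "automorphism V E \<phi>" and S: "S \<subseteq> V"
  shows "card {v \<in> \<phi> ` S. P (degree V E v)} = card {v \<in> S. P (degree V E v)}"
proof -
  have "{v \<in> \<phi> ` S. P (degree V E v)} = \<phi> ` {v \<in> S. P (degree V E v)}"
    using S automorphism_degree[OF phi] by force
  moreover have "inj_on \<phi> {v \<in> S. P (degree V E v)}"
    using phi S unfolding automorphism_def bij_betw_def by (auto intro: inj_on_subset)
  ultimately show ?thesis
    by (simp add: card_image)
qed

lemma two_le_degree_if_inner:
  assumes sg: "simple_graph V E" and p: "is_path V E (xs @ a # b # c # ys)"
  shows "2 \<le> degree V E b"
proof -
  have "E a b" "E b c"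
    using p is_walk_edge[of V E xs a b "c # ys"] is_walk_edge[of V E "xs @ [a]" b c ys]
    unfolding is_path_def by simp_all
  then have "{a, c} \<subseteq> neighbours V E b"
    using sg unfolding simple_graph_def neighbours_def by blast
  moreover have "a \<noteq> c"
    using p unfolding is_path_def by auto
  moreover have "finite (neighbours V E b)"
    using sg unfolding simple_graph_def neighbours_def by simp
  ultimately show ?thesis
    unfolding degree_def by (metis card_2_iff card_mono)
qed

lemma path_last_has_outside_neighbour:
  assumes sg: "simple_graph V E" and acyclic: "\<not> has_cycle V E" and W: "is_path V E W"
    and deg: "2 \<le> degree V E (last W)"
  obtains z where "z \<in> V - set W" "E (last W) z"
proof -
  have "W \<noteq> []"
    using W by (auto simp: is_path_def)
  have "neighbours V E (last W) \<inter> set W \<subseteq> {W ! (length W - 2)}"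
  proof
    fix w
    assume "w \<in> neighbours V E (last W) \<inter> set W"
    then obtain i where i: "i < length W" "w = W ! i" "E (W ! (length W - 1)) (W ! i)"
      using \<open>W \<noteq> []\<close> unfolding neighbours_def by (auto simp: in_set_conv_nth last_conv_nth)
    then have "length W - 1 = Suc i"
      using acyclic_path_adjacent[OF sg acyclic W, of "length W - 1" i] \<open>W \<noteq> []\<close> by auto
    then have "i = length W - 2"
      by linarith
    then show "w \<in> {W ! (length W - 2)}"
      using i(2) by simp
  qed
  moreover have "finite (neighbours V E (last W))"
    using sg unfolding simple_graph_def neighbours_def by simp
  ultimately have "\<not> neighbours V E (last W) \<subseteq> set W"
    using deg unfolding degree_def by (metis card_le_Suc0_iff_eq inf.absorb1 insert_iff not_less_eq_eq
        numeral_2_eq_2 singleton_iff subset_iff)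
  then show thesis
    using that unfolding neighbours_def by blast
qed

text \<open>Both choices of an endpoint of W give minimum zero forcing sets, and an automorphism
  between them preserves the number of vertices of degree at least two.\<close>

lemma min_path_cover_end_degrees:
  assumes sg: "simple_graph V E" and acyclic: "\<not> has_cycle V E" and iso: "iso_unique_zf V E"
    and m: "min_path_cover V E Q" and W: "W \<in> Q"
  shows "2 \<le> degree V E (hd W) \<longleftrightarrow> 2 \<le> degree V E (last W)"
proof -
  have c: "path_cover V E Q" and "finite Q"
    using m by (simp_all add: min_path_cover_def)
  define C where "C = hd ` (Q - {W})"
  have "finite C"
    unfolding C_def using \<open>finite Q\<close> by simp
  have "2 \<le> degree V E e'"
    if e: "e = hd W \<or> e = last W" and e': "e' = hd W \<or> e' = last W" and "2 \<le> degree V E e" for e e'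
  proof (rule ccontr)
    assume "\<not> 2 \<le> degree V E e'"
    have min_e: "min_zero_forcing_set V E (insert e C)" and "min_zero_forcing_set V E (insert e' C)"
      unfolding C_def using min_zero_forcing_set_of_min_path_cover[OF sg acyclic m W] e e' by blast+
    then obtain \<phi> where phi: "automorphism V E \<phi>" "\<phi> ` insert e C = insert e' C"
      using iso unfolding iso_unique_zf_def by blast
    have "insert e C \<subseteq> V"
      using min_e unfolding min_zero_forcing_set_def zero_forcing_set_def by blast
    then have "card {v \<in> insert e' C. 2 \<le> degree V E v} = card {v \<in> insert e C. 2 \<le> degree V E v}"
      using automorphism_card_degree_filter[OF phi(1)] phi(2) by metis
    moreover have "e \<in> set W"
      using e path_cover_not_Nil[OF c W] by auto
    then have "e \<notin> C"
      unfolding C_def by (rule path_cover_notin_other_hds[OF c W])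
    moreover have "{v \<in> insert e C. 2 \<le> degree V E v} = insert e {v \<in> C. 2 \<le> degree V E v}"
      "{v \<in> insert e' C. 2 \<le> degree V E v} = {v \<in> C. 2 \<le> degree V E v}"
      using \<open>2 \<le> degree V E e\<close> \<open>\<not> 2 \<le> degree V E e'\<close> by auto
    ultimately show False
      using \<open>finite C\<close> by simp
  qed
  then show ?thesis
    by blast
qed

text \<open>If hd W had degree at least two, so would last W, and W could be extended through an
  outside neighbour of last W into a longer path of another minimum path cover.\<close>

lemma min_path_cover_end_degree:
  assumes sg: "simple_graph V E" and acyclic: "\<not> has_cycle V E" and iso: "iso_unique_zf V E"
    and m: "min_path_cover V E Q" and W: "W \<in> Q"
  shows "degree V E (hd W) < 2" and "degree V E (last W) < 2"
proof -
  have "degree V E (hd W) < 2"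
    using m W
  proof (induction "card V - length W" arbitrary: Q W rule: less_induct)
    case less
    have c: "path_cover V E Q"
      using less.prems(1) by (simp add: min_path_cover_def)
    have pW: "is_path V E W" and "W \<noteq> []"
      using path_cover_is_path[OF c less.prems(2)] path_cover_not_Nil[OF c less.prems(2)] .
    show ?case
    proof (rule ccontr)
      assume "\<not> degree V E (hd W) < 2"
      then have "2 \<le> degree V E (last W)"
        using min_path_cover_end_degrees[OF sg acyclic iso less.prems] by simp
      then obtain z where z: "z \<in> V - set W" "E (last W) z"
        using path_last_has_outside_neighbour[OF sg acyclic pW] by blast
      then obtain Rz where Rz: "Rz \<in> Q" "z \<in> set Rz"
        using path_cover_covers[OF c] by blast
      then obtain R1 R2 where Rz_eq: "Rz = R1 @ z # R2"
        by (metis split_list)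
      have "W \<noteq> Rz"
        using z Rz by blast
      have "R1 \<noteq> []"
      proof
        assume "R1 = []"
        then have "hd Rz = z"
          using Rz_eq by simp
        then show False
          using min_path_cover_no_join[OF less.prems(1,2) Rz(1) \<open>W \<noteq> Rz\<close>] z(2) by simp
      qed
      then have m': "min_path_cover V E (Q - {W, Rz} \<union> {W @ z # R2, R1})"
        using min_path_cover_move_suffix[OF less.prems(1,2), of R1 "z # R2"] Rz Rz_eq \<open>W \<noteq> Rz\<close> z(2)
        by simp
      moreover have "card V - length (W @ z # R2) < card V - length W"
      proof -
        have "is_path V E (W @ z # R2)"
          using m' path_cover_is_path unfolding min_path_cover_def by blast
        then have "length (W @ z # R2) \<le> card V"
          using sg unfolding simple_graph_def is_path_def is_walk_def
          by (metis card_mono distinct_card)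
        then show ?thesis
          by simp
      qed
      ultimately have "degree V E (hd (W @ z # R2)) < 2"
        using less.hyps by blast
      then show False
        using \<open>\<not> degree V E (hd W) < 2\<close> \<open>W \<noteq> []\<close> by simp
    qed
  qed
  then show "degree V E (hd W) < 2" "degree V E (last W) < 2"
    using min_path_cover_end_degrees[OF sg acyclic iso m W] by simp_all
qed

lemma neighbours_eq_if_degree_lt_2:
  "finite V \<Longrightarrow> degree V E x < 2 \<Longrightarrow> y \<in> V \<Longrightarrow> E x y \<Longrightarrow> neighbours V E x = {y}"
  unfolding degree_def neighbours_def
  by (auto simp: card_le_Suc0_iff_eq less_Suc_eq_le numeral_2_eq_2)

lemma min_path_cover_path_through_neighbour:
  assumes sg: "simple_graph V E" and acyclic: "\<not> has_cycle V E" and iso: "iso_unique_zf V E"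
    and m: "min_path_cover V E Q" and x: "[x] \<in> Q" and R: "R1 @ y # R2 \<in> Q" and xy: "E x y"
  shows "length R1 = 1" and "length R2 = 1"
proof -
  have sym: "E y x" and "x \<noteq> y"
    using xy sg unfolding simple_graph_def by blast+
  have path: "is_path V E (R1 @ y # R2)"
    using m R path_cover_is_path unfolding min_path_cover_def by blast
  have neq: "[x] \<noteq> R1 @ y # R2"
    using \<open>x \<noteq> y\<close> by (cases R1) auto
  have "R1 \<noteq> []"
    using min_path_cover_no_join[OF m x R neq] xy by (cases R1) auto
  have "R2 \<noteq> []"
    using min_path_cover_no_join[OF m R x neq[symmetric]] sym by (cases R2) auto
  show "length R1 = 1"
  proof (rule ccontr)
    assume "length R1 \<noteq> 1"
    obtain ys a where "R1 = ys @ [a]"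
      using \<open>R1 \<noteq> []\<close> by (metis append_butlast_last_id)
    moreover from this have "ys \<noteq> []"
      using \<open>length R1 \<noteq> 1\<close> by auto
    then obtain xs a0 where "ys = xs @ [a0]"
      by (metis append_butlast_last_id)
    ultimately have R1: "R1 = xs @ [a0, a]"
      by simp
    have "min_path_cover V E (Q - {[x], R1 @ y # R2} \<union> {[x] @ y # R2, R1})"
      using min_path_cover_move_suffix[OF m x R neq \<open>R1 \<noteq> []\<close>] xy by simp
    then have "degree V E (last R1) < 2"
      using min_path_cover_end_degree(2)[OF sg acyclic iso] by blast
    moreover have "2 \<le> degree V E (last R1)"
      using two_le_degree_if_inner[OF sg, of xs a0 a y R2] path R1 by simp
    ultimately show False
      by simp
  qed
  show "length R2 = 1"
  proof (rule ccontr)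
    assume "length R2 \<noteq> 1"
    obtain b R2' where "R2 = b # R2'"
      using \<open>R2 \<noteq> []\<close> by (metis neq_Nil_conv)
    moreover from this have "R2' \<noteq> []"
      using \<open>length R2 \<noteq> 1\<close> by auto
    then obtain b' zs where "R2' = b' # zs"
      by (metis neq_Nil_conv)
    ultimately have R2: "R2 = b # b' # zs"
      by simp
    have R': "(R1 @ [y]) @ R2 \<in> Q" "(R1 @ [y]) @ R2 \<noteq> [x]"
      using R neq by simp_all
    have "min_path_cover V E (Q - {(R1 @ [y]) @ R2, [x]} \<union> {(R1 @ [y]) @ [x], R2})"
      by (rule min_path_cover_move_prefix[OF m R'(1) x R'(2)]) (use \<open>R2 \<noteq> []\<close> sym in simp_all)
    then have "degree V E (hd R2) < 2"
      using min_path_cover_end_degree(1)[OF sg acyclic iso] by blast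
    moreover have "2 \<le> degree V E (hd R2)"
      using two_le_degree_if_inner[OF sg, of R1 y b b' zs] path R2 by simp
    ultimately show False
      by simp
  qed
qed

theorem lemma3p8:
  fixes V :: "'a set" and E :: "'a \<Rightarrow> 'a \<Rightarrow> bool" and \<P> :: "'a list set" and x :: 'a
  assumes "is_tree V E"
    and "iso_unique_zf V E"
    and "card V \<ge> 2"
    and "min_path_cover V E \<P>"
    and "[x] \<in> \<P>"
  shows "\<exists>y. {w \<in> V. E x w} = {y} \<and> (\<exists>R\<in>\<P>. length R = 3 \<and> R ! 1 = y)"
proof -
  have sg: "simple_graph V E" and conn: "connected_graph V E" and acyclic: "\<not> has_cycle V E"
    using assms(1) unfolding is_tree_def by auto
  have cover: "path_cover V E \<P>"
    using assms(4) by (simp add: min_path_cover_def)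
  then have "x \<in> V"
    using path_cover_subset[OF _ assms(5)] by simp
  then obtain y where xy: "E x y"
    using connected_graph_has_neighbour[OF conn _ assms(3)] sg unfolding simple_graph_def by blast
  then have "y \<in> V"
    using sg unfolding simple_graph_def by blast
  have "neighbours V E x = {y}"
    using neighbours_eq_if_degree_lt_2 min_path_cover_end_degree(1)[OF sg acyclic assms(2,4,5)]
      xy \<open>y \<in> V\<close> sg unfolding simple_graph_def by fastforce
  moreover obtain R where R: "R \<in> \<P>" "y \<in> set R"
    using path_cover_covers[OF cover \<open>y \<in> V\<close>] by blast
  then obtain R1 R2 where R_eq: "R = R1 @ y # R2"
    using split_list by metis
  then have "length R1 = 1" "length R2 = 1"
    using min_path_cover_path_through_neighbour[OF sg acyclic assms(2,4,5)] R(1) xy by blast+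
  then have "length R = 3 \<and> R ! 1 = y"
    using R_eq by (auto simp: length_Suc_conv)
  ultimately show ?thesis
    using R(1) unfolding neighbours_def by blast
qed

end
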